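(* Let $A$ be a Banach algebra with $A^*A=A^*$. If $aa''\in Z_1(A^{**})$ for all $a\in A$ and $a''\in A^{**}$, then $A$ is Arens regular.
   Context: $A^{**}$ carries the first Arens product: for $a''=w^*\text{-}\lim_\alpha a_\alpha$, $b''=w^*\text{-}\lim_\beta b_\beta$ ($a_\alpha,b_\beta\in A$) and $a'\in A^*$, $\langle a''b'',a'\rangle=\lim_\alpha\lim_\beta\langle a',a_\alpha b_\beta\rangle$; the second Arens product is $\langle a''\circ b'',a'\rangle=\lim_\beta\lim_\alpha\langle a',a_\alpha b_\beta\rangle$. $A$ is Arens regular if the two products coincide. $Z_1(A^{**})$ is the set of $a''\in A^{**}$ such that $b''\mapsto a''b''$ is weak$^*$-to-weak$^*$ continuous. For $a'\in A^*$, $a\in A$, $\langle a'a,b\rangle=\langle a',ab\rangle$, and $A^*A=\{a'a:a'\in A^*,a\in A\}$. *)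

theory Defs
  imports "HOL-Analysis.Analysis"
begin

type_synonym 'a dual = "'a \<Rightarrow>\<^sub>L real"
type_synonym 'a bidual = "('a \<Rightarrow>\<^sub>L real) \<Rightarrow>\<^sub>L real"

definition dual_act :: "'a::real_normed_algebra dual \<Rightarrow> 'a \<Rightarrow> 'a dual" where
  "dual_act f a = Blinfun (\<lambda>b. blinfun_apply f (a * b))"

definition dual_lact :: "'a \<Rightarrow> 'a::real_normed_algebra dual \<Rightarrow> 'a dual" where
  "dual_lact a f = Blinfun (\<lambda>b. blinfun_apply f (b * a))"

definition bidual_act :: "'a::real_normed_algebra bidual \<Rightarrow> 'a dual \<Rightarrow> 'a dual" where
  "bidual_act G f = Blinfun (\<lambda>a. blinfun_apply G (dual_act f a))"

definition bidual_ract :: "'a::real_normed_algebra dual \<Rightarrow> 'a bidual \<Rightarrow> 'a dual" where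
  "bidual_ract f F = Blinfun (\<lambda>b. blinfun_apply F (dual_lact b f))"

text \<open>First Arens product: <a'' b'', a'> = <a'', b'' . a'>
  (= lim_alpha lim_beta <a', a_alpha b_beta>).\<close>
definition arens1 :: "'a::real_normed_algebra bidual \<Rightarrow> 'a bidual \<Rightarrow> 'a bidual" where
  "arens1 F G = Blinfun (\<lambda>f. blinfun_apply F (bidual_act G f))"

text \<open>Second Arens product: <a'' o b'', a'> = <b'', a' . a''>
  (= lim_beta lim_alpha <a', a_alpha b_beta>).\<close>
definition arens2 :: "'a::real_normed_algebra bidual \<Rightarrow> 'a bidual \<Rightarrow> 'a bidual" where
  "arens2 F G = Blinfun (\<lambda>f. blinfun_apply G (bidual_ract f F))"

definition canon :: "'a::real_normed_vector \<Rightarrow> 'a bidual" where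
  "canon a = Blinfun (\<lambda>f. blinfun_apply f a)"

definition wstar :: "'a::real_normed_vector bidual topology" where
  "wstar = topology (\<lambda>S. \<exists>U::('a dual \<Rightarrow> real) set. open U \<and> S = (\<lambda>F. blinfun_apply F) -` U)"

definition Z1 :: "'a::real_normed_algebra bidual set" where
  "Z1 = {F. continuous_map wstar wstar (\<lambda>G. arens1 F G)}"

definition arens_regular :: "'a::real_normed_algebra itself \<Rightarrow> bool" where
  "arens_regular _ \<longleftrightarrow> (\<forall>F G :: 'a bidual. arens1 F G = arens2 F G)"

end

theory Submission
  imports Defs
begin

(*
  Let K lie in the left topological centre Z1 of the bidual.  Then the two
  Arens products K G and K o G coincide for every G: both depend weak*-continuously on
  G (the first by definition of Z1, the second always), they agree when G is the
  canonical image of an element of A, and this image is weak*-dense in the bidual (a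
  finite-dimensional interpolation argument: every G is matched by some a in A on any
  finite set of functionals).

  For F, G in the bidual and a functional f a (every functional has this form by the
  factorisation hypothesis), the module identities  <F G, f a> = <(a F) G, f>  and
  <F o G, f a> = <(a F) o G, f>  reduce F G = F o G to the coincidence of the two
  products on the left factor a F, which lies in Z1 by hypothesis.
*)

lemma bounded_bilinear_compose_linear:
  assumes g: "bounded_linear g" and p: "bounded_bilinear p"
  shows "bounded_bilinear (\<lambda>x y. g (p x y))"
proof -
  interpret g: bounded_linear g by (rule g)
  interpret p: bounded_bilinear p by (rule p)
  obtain K where K: "\<And>z. norm (g z) \<le> norm z * K" "K \<ge> 0" using g.nonneg_bounded by blast
  obtain L where L: "\<And>x y. norm (p x y) \<le> norm x * norm y * L" using p.bounded by blast
  show ?thesis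
  proof
    show "\<exists>M. \<forall>x y. norm (g (p x y)) \<le> norm x * norm y * M"
      by (rule exI[of _ "L * K"]) (metis K L mult_right_mono order_trans mult.assoc)
  qed (simp_all add: p.add_left p.add_right p.scaleR_left p.scaleR_right g.add g.scaleR)
qed

lemma Blinfun_bilinear_apply:
  assumes "bounded_bilinear p"
  shows "blinfun_apply (Blinfun (p x)) y = p x y"
  using bounded_bilinear.bounded_linear_right[OF assms] by (simp add: bounded_linear_Blinfun_apply)

lemma bounded_linear_Blinfun_bilinear:
  assumes "bounded_bilinear p"
  shows "bounded_linear (\<lambda>x. Blinfun (p x))"
  by (rule transfer_bounded_bilinear_bounded_linearI[THEN iffD1, OF _ assms])
     (simp add: Blinfun_bilinear_apply[OF assms])

lemma dual_act_eq_compose: "dual_act f a = f o\<^sub>L blinfun_mult_right a"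
proof -
  have "(\<lambda>b. blinfun_apply f (a * b)) = blinfun_apply (f o\<^sub>L blinfun_mult_right a)" by auto
  then show ?thesis unfolding dual_act_def by (simp add: blinfun_apply_inverse)
qed

lemma dual_lact_eq_compose: "dual_lact a f = f o\<^sub>L blinfun_mult_left a"
proof -
  have "(\<lambda>b. blinfun_apply f (b * a)) = blinfun_apply (f o\<^sub>L blinfun_mult_left a)" by auto
  then show ?thesis unfolding dual_lact_def by (simp add: blinfun_apply_inverse)
qed

lemma dual_act_apply [simp]: "blinfun_apply (dual_act f a) b = blinfun_apply f (a * b)"
  by (simp add: dual_act_eq_compose)

lemma dual_lact_apply [simp]: "blinfun_apply (dual_lact a f) b = blinfun_apply f (b * a)"
  by (simp add: dual_lact_eq_compose)

lemma bounded_bilinear_dual_act: "bounded_bilinear (\<lambda>f a. dual_act f a)"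
  unfolding dual_act_eq_compose
  by (rule bounded_bilinear.comp[OF bounded_bilinear_blinfun_compose
        bounded_linear_ident bounded_linear_blinfun_mult_right])

lemma bounded_bilinear_dual_lact: "bounded_bilinear (\<lambda>f b. dual_lact b f)"
  unfolding dual_lact_eq_compose
  by (rule bounded_bilinear.comp[OF bounded_bilinear_blinfun_compose
        bounded_linear_ident bounded_linear_blinfun_mult_left])

lemma bounded_bilinear_bidual_act: "bounded_bilinear (\<lambda>f a. blinfun_apply G (dual_act f a))"
  by (rule bounded_bilinear_compose_linear[OF blinfun.bounded_linear_right bounded_bilinear_dual_act])

lemma bounded_bilinear_bidual_ract: "bounded_bilinear (\<lambda>f b. blinfun_apply F (dual_lact b f))"
  by (rule bounded_bilinear_compose_linear[OF blinfun.bounded_linear_right bounded_bilinear_dual_lact])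

lemma bidual_act_apply [simp]:
  "blinfun_apply (bidual_act G f) a = blinfun_apply G (dual_act f a)"
  unfolding bidual_act_def by (rule Blinfun_bilinear_apply[OF bounded_bilinear_bidual_act])

lemma bidual_ract_apply [simp]:
  "blinfun_apply (bidual_ract f F) b = blinfun_apply F (dual_lact b f)"
  unfolding bidual_ract_def by (rule Blinfun_bilinear_apply[OF bounded_bilinear_bidual_ract])

lemma arens1_apply [simp]: "blinfun_apply (arens1 F G) f = blinfun_apply F (bidual_act G f)"
proof -
  have "bounded_linear (\<lambda>f. bidual_act G f)"
    using bounded_linear_Blinfun_bilinear[OF bounded_bilinear_bidual_act]
    by (simp add: bidual_act_def)
  then have "bounded_linear (\<lambda>f. blinfun_apply F (bidual_act G f))"
    by (rule bounded_linear_compose[OF blinfun.bounded_linear_right])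
  then show ?thesis unfolding arens1_def by (simp add: bounded_linear_Blinfun_apply)
qed

lemma arens2_apply [simp]: "blinfun_apply (arens2 F G) f = blinfun_apply G (bidual_ract f F)"
proof -
  have "bounded_linear (\<lambda>f. bidual_ract f F)"
    using bounded_linear_Blinfun_bilinear[OF bounded_bilinear_bidual_ract]
    by (simp add: bidual_ract_def)
  then have "bounded_linear (\<lambda>f. blinfun_apply G (bidual_ract f F))"
    by (rule bounded_linear_compose[OF blinfun.bounded_linear_right])
  then show ?thesis unfolding arens2_def by (simp add: bounded_linear_Blinfun_apply)
qed

lemma canon_apply [simp]: "blinfun_apply (canon a) f = blinfun_apply f a"
  unfolding canon_def by (simp add: bounded_linear_Blinfun_apply blinfun.bounded_linear_left)

lemma dual_in_span_of_common_kernel: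
  fixes B :: "'a::real_normed_vector dual set"
  assumes "finite B"
    and "\<And>x. (\<forall>b\<in>B. blinfun_apply b x = 0) \<Longrightarrow> blinfun_apply f x = 0"
  shows "f \<in> span B"
  using assms
proof (induction B arbitrary: f rule: finite_induct)
  case empty
  then have "f = 0" by (intro blinfun_eqI) simp
  then show ?case by (simp add: span_zero)
next
  case (insert g B)
  show ?case
  proof (cases "\<forall>x. (\<forall>b\<in>B. blinfun_apply b x = 0) \<longrightarrow> blinfun_apply g x = 0")
    case True
    with insert.prems have "f \<in> span B" by (intro insert.IH) auto
    then show ?thesis by (meson span_mono subset_insertI subsetD)
  next
    case False
    then obtain x1 where x1: "\<forall>b\<in>B. blinfun_apply b x1 = 0" "blinfun_apply g x1 \<noteq> 0" by blast
    define x0 where "x0 = (1 / blinfun_apply g x1) *\<^sub>R x1"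
    have x0: "\<forall>b\<in>B. blinfun_apply b x0 = 0" "blinfun_apply g x0 = 1"
      using x1 by (auto simp: x0_def blinfun.scaleR_right)
    txt \<open>Subtract from f its g-component; the remainder vanishes on the kernel of B.\<close>
    define f' where "f' = f - blinfun_apply f x0 *\<^sub>R g"
    have "f' \<in> span B"
    proof (rule insert.IH)
      fix x assume xk: "\<forall>b\<in>B. blinfun_apply b x = 0"
      define y where "y = x - blinfun_apply g x *\<^sub>R x0"
      have "\<forall>b\<in>insert g B. blinfun_apply b y = 0"
        using xk x0 by (auto simp: y_def blinfun.diff_right blinfun.scaleR_right)
      then have "blinfun_apply f y = 0" using insert.prems by blast
      then show "blinfun_apply f' x = 0"
        by (simp add: f'_def y_def blinfun.diff_right blinfun.scaleR_right mult.commute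
            minus_blinfun.rep_eq scaleR_blinfun.rep_eq)
    qed
    then have "f' + blinfun_apply f x0 *\<^sub>R g \<in> span (insert g B)"
      by (meson span_add span_mul span_base span_mono insertI1 subset_insertI subsetD)
    then show ?thesis by (simp add: f'_def)
  qed
qed

lemma finite_interpolation:
  fixes I :: "'a::real_normed_vector dual set" and G :: "'a bidual"
  assumes "finite I"
  shows "\<exists>a. \<forall>i\<in>I. blinfun_apply i a = blinfun_apply G i"
  using assms
proof (induction I rule: finite_induct)
  case empty then show ?case by simp
next
  case (insert f I)
  then obtain a0 where a0: "\<forall>i\<in>I. blinfun_apply i a0 = blinfun_apply G i" by blast
  show ?case
  proof (cases "\<forall>x. (\<forall>i\<in>I. blinfun_apply i x = 0) \<longrightarrow> blinfun_apply f x = 0")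
    case True
    txt \<open>f depends linearly on I, so a0 already interpolates f.\<close>
    then have "f \<in> span I" using dual_in_span_of_common_kernel[OF insert.hyps(1)] by blast
    then have "blinfun_apply f a0 = blinfun_apply G f"
    proof (induction rule: span_induct_alt)
      case base then show ?case by (simp add: blinfun.zero_right)
    next
      case (step c x y)
      then show ?case using a0
        by (simp add: blinfun.add_right blinfun.scaleR_right plus_blinfun.rep_eq scaleR_blinfun.rep_eq)
    qed
    then show ?thesis using a0 by auto
  next
    case False
    txt \<open>Otherwise correct a0 along a vector killed by I but not by f.\<close>
    then obtain x1 where x1: "\<forall>i\<in>I. blinfun_apply i x1 = 0" "blinfun_apply f x1 \<noteq> 0" by blast
    define a where "a = a0 + ((blinfun_apply G f - blinfun_apply f a0) / blinfun_apply f x1) *\<^sub>R x1"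
    have "\<forall>i\<in>insert f I. blinfun_apply i a = blinfun_apply G i"
      using a0 x1 by (auto simp: a_def blinfun.add_right blinfun.scaleR_right)
    then show ?thesis by blast
  qed
qed

lemma wstar_pullback: "wstar = pullback_topology UNIV blinfun_apply euclidean"
  unfolding wstar_def pullback_topology_def by simp

lemma openin_wstar: "openin wstar S \<longleftrightarrow> (\<exists>U. open U \<and> S = blinfun_apply -` U)"
  unfolding wstar_pullback openin_pullback_topology by simp

lemma topspace_wstar [simp]: "topspace wstar = UNIV"
  unfolding wstar_pullback topspace_pullback_topology by simp

lemma continuous_map_wstar_eval: "continuous_map wstar euclidean (\<lambda>G. blinfun_apply G f)"
  unfolding continuous_map_def
proof (intro conjI allI impI)
  fix U :: "real set" assume "openin euclidean U"
  then have "open ((\<lambda>\<phi>. \<phi> f) -` U)"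
    by (intro open_vimage continuous_on_product_coordinates) simp
  then show "openin wstar {G \<in> topspace wstar. blinfun_apply G f \<in> U}"
    unfolding openin_wstar by (intro exI[of _ "(\<lambda>\<phi>. \<phi> f) -` U"]) auto
qed simp

lemma canon_wstar_dense: "G \<in> wstar closure_of range canon"
  unfolding in_closure_of
proof (intro conjI allI impI)
  fix S assume "G \<in> S \<and> openin wstar S"
  then obtain V where V: "open V" "S = blinfun_apply -` V" "blinfun_apply G \<in> V"
    unfolding openin_wstar by auto
  have "openin (product_topology (\<lambda>i. euclidean) UNIV) V"
    using V(1) by (simp add: euclidean_product_topology)
  from product_topology_open_contains_basis[OF this V(3)] obtain X where
    X: "blinfun_apply G \<in> (\<Pi>\<^sub>E i\<in>UNIV. X i)" "finite {i. X i \<noteq> UNIV}" "(\<Pi>\<^sub>E i\<in>UNIV. X i) \<subseteq> V"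
    by auto
  obtain a where a: "\<forall>i\<in>{i. X i \<noteq> UNIV}. blinfun_apply i a = blinfun_apply G i"
    using finite_interpolation[OF X(2)] by blast
  have "blinfun_apply (canon a) i \<in> X i" for i
    using a X(1) by (cases "X i = UNIV") auto
  then have "canon a \<in> S" using X(3) V(2) by auto
  then show "\<exists>y. y \<in> range canon \<and> y \<in> S" by blast
qed simp

lemma arens_products_agree_canon: "arens1 K (canon a) = arens2 K (canon a)"
proof (rule blinfun_eqI)
  fix f
  have "bidual_act (canon a) f = dual_lact a f" by (rule blinfun_eqI) simp
  then show "blinfun_apply (arens1 K (canon a)) f = blinfun_apply (arens2 K (canon a)) f"
    by simp
qed

text \<open>On the left topological centre the two Arens products coincide: both sides are
  weak*-continuous in the right factor and agree on the dense canonical image.\<close>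
lemma Z1_arens_products_agree:
  assumes "K \<in> Z1"
  shows "arens1 K G = arens2 K G"
proof (rule blinfun_eqI)
  fix f
  have "continuous_map wstar euclidean (\<lambda>G. blinfun_apply (arens1 K G) f)"
    using assms continuous_map_compose[OF _ continuous_map_wstar_eval]
    unfolding Z1_def by (fastforce simp: o_def)
  moreover have "continuous_map wstar euclidean (\<lambda>G. blinfun_apply (arens2 K G) f)"
    using continuous_map_wstar_eval by simp
  ultimately show "blinfun_apply (arens1 K G) f = blinfun_apply (arens2 K G) f"
    by (rule forall_in_closure_of_eq[OF canon_wstar_dense Hausdorff_space_euclidean])
       (auto simp del: arens1_apply arens2_apply simp: arens_products_agree_canon)
qed

lemma arens1_apply_dual_act:
  "blinfun_apply (arens1 F G) (dual_act f a) = blinfun_apply (arens1 (arens1 (canon a) F) G) f"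
proof -
  have "dual_act (dual_act f a) x = dual_act f (a * x)" for x
    by (rule blinfun_eqI) (simp add: mult.assoc)
  then have "bidual_act G (dual_act f a) = dual_act (bidual_act G f) a"
    by (intro blinfun_eqI) simp
  then show ?thesis by simp
qed

lemma arens2_apply_dual_act:
  "blinfun_apply (arens2 F G) (dual_act f a) = blinfun_apply (arens2 (arens1 (canon a) F) G) f"
proof -
  have "dual_lact b (dual_act f a) = dual_act (dual_lact b f) a" for b
    by (rule blinfun_eqI) (simp add: mult.assoc)
  then have "bidual_ract (dual_act f a) F = bidual_ract f (arens1 (canon a) F)"
    by (intro blinfun_eqI) simp
  then show ?thesis by simp
qed

theorem mainTheorem14:
  assumes factor: "{dual_act f a | f a. True} = (UNIV :: ('a::{real_normed_algebra, banach}) dual set)"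
    and center: "\<forall>(a::'a) (F::'a bidual). arens1 (canon a) F \<in> Z1"
  shows "arens_regular TYPE('a)"
  unfolding arens_regular_def
proof (intro allI blinfun_eqI)
  fix F G :: "'a bidual" and g :: "'a dual"
  obtain f a where g: "g = dual_act f a" using factor by blast
  have "arens1 (arens1 (canon a) F) G = arens2 (arens1 (canon a) F) G"
    using center by (intro Z1_arens_products_agree) blast
  then show "blinfun_apply (arens1 F G) g = blinfun_apply (arens2 F G) g"
    unfolding g arens1_apply_dual_act arens2_apply_dual_act by simp
qed

end
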